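(* If $m$ and $n$ are non-equal positive integers of the same parity, then \[ \sum_{k=1}^\infty\frac{\zeta(2k)}{k(2k+m)(2k+n)} = -\frac{m+n}{(mn)^2}+\frac{\ln(2\pi)}{mn} -\frac{1+(-1)^n}{2(m-n)}\left(i^m(m-1)!\frac{\zeta(m+1)}{(2\pi)^m}-i^n(n-1)!\frac{\zeta(n+1)}{(2\pi)^n}\right) +\frac{1}{m-n}\left((m-1)!\sum_{j=1}^{\lfloor m/2\rfloor}\frac{(-1)^j\zeta(2j+1)}{(m-2j)!(2\pi)^{2j}}-(n-1)!\sum_{j=1}^{\lfloor n/2\rfloor}\frac{(-1)^j\zeta(2j+1)}{(n-2j)!(2\pi)^{2j}}\right). \]
   Context: $\zeta$ is the Riemann zeta function, $i$ is the imaginary unit, and empty sums equal $0$. *)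

theory Defs
  imports "HOL-Analysis.Analysis"
begin

text \<open>Riemann zeta function on real arguments s > 1, given by its Dirichlet series
  (the only range in which it is used here: integer arguments \<ge> 2).\<close>
definition rzeta :: "real \<Rightarrow> real" where
  "rzeta s = (\<Sum>k. 1 / (real (Suc k)) powr s)"

end

(*
  For 0 < y < 1 the logarithm of the sine product gives
    sum_k zeta(2k) y^(2k) / k = ln (pi y / sin (pi y)),
  so integrating against y^(m-1) over [0,1] (monotone convergence) yields
    sum_k zeta(2k) / (k (2k+m)) = ln(2 pi)/m - 1/m^2 - int_0^1 y^(m-1) ln (2 sin (pi y)) dy,
  and the theorem is the difference of these identities for m and n, divided by m - n.

  The remaining integral is computed with the Clausen function Cl2(2 pi y) = sum_k sin(2 pi k y)/k^2,
  whose derivative is -2 pi ln (2 sin (pi y)): integrating by parts and then termwise against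
  y^(m-2) sin (2 pi k y) turns it into a combination of zeta(2j+1)/(2 pi)^(2j) over 2j < m.
  For even m the sum in the statement also contains j = m/2; for m and n of the same parity these
  extra summands are cancelled by the middle term of the statement.
*)
theory Submission
  imports Defs "HOL-Real_Asymp.Real_Asymp"
begin

section \<open>Series and integrals\<close>

lemma has_integral_of_real_derivative:
  fixes F f :: "real \<Rightarrow> real"
  assumes "a \<le> b" and "\<And>x. x \<in> {a..b} \<Longrightarrow> (F has_real_derivative f x) (at x)"
  shows "(f has_integral (F b - F a)) {a..b}"
  using assms
  by (intro fundamental_theorem_of_calculus)
     (auto simp: has_real_derivative_iff_has_vector_derivative has_vector_derivative_at_within)

lemma power_has_integral_01: "((\<lambda>y::real. y ^ p) has_integral 1 / (real p + 1)) {0..1}"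
proof -
  have "((\<lambda>y::real. y ^ p) has_integral 1 ^ Suc p / real (Suc p) - 0 ^ Suc p / real (Suc p)) {0..1}"
    by (intro has_integral_of_real_derivative) (auto intro!: derivative_eq_intros simp del: power_Suc)
  thus ?thesis by (simp add: add.commute)
qed

lemma power_ln_has_integral_01: "((\<lambda>y::real. y ^ p * ln y) has_integral - 1 / (real p + 1)\<^sup>2) {0..1}"
proof -
  define c where "c = real p + 1"
  have c: "real (Suc p) = c" "c \<noteq> 0" by (simp_all add: c_def)
  define F where "F y = y ^ Suc p * ln y / c - y ^ Suc p / c\<^sup>2" for y :: real
  have "((\<lambda>y::real. y * ln y) \<longlongrightarrow> 0) (at_right 0)" by real_asymp
  from tendsto_mult[OF tendsto_power[OF tendsto_ident_at] this]
  have "((\<lambda>y::real. y ^ p * (y * ln y)) \<longlongrightarrow> 0 ^ p * 0) (at_right 0)" .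
  hence "(F \<longlongrightarrow> 0 ^ p * 0 / c - 0 ^ Suc p / c\<^sup>2) (at_right 0)"
    unfolding F_def using c
    by (intro tendsto_diff tendsto_divide tendsto_power tendsto_ident_at) (auto simp: mult_ac)
  moreover have "F 0 = 0 ^ p * 0 / c - 0 ^ Suc p / c\<^sup>2"
    by (simp add: F_def)
  ultimately have "continuous (at 0 within {0..1}) F"
    by (simp add: continuous_within at_within_Icc_at_right)
  moreover have "continuous (at x within {0..1}) F" if "0 < x" for x
    unfolding F_def using that c
    by (intro continuous_at_imp_continuous_within[where s = "{0..1}"]) (intro continuous_intros, auto)
  ultimately have "continuous_on {0..1} F"
    unfolding continuous_on_eq_continuous_within by (metis atLeastAtMost_iff le_less)
  moreover have "(F has_real_derivative y ^ p * ln y) (at y)" if "0 < y" for y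
  proof -
    have pow: "((\<lambda>y. y ^ Suc p) has_real_derivative c * y ^ p) (at y)"
      using DERIV_pow[of "Suc p" y] c by simp
    have "(F has_real_derivative (c * y ^ p * ln y + 1 / y * y ^ Suc p) / c - c * y ^ p / c\<^sup>2) (at y)"
      unfolding F_def
      by (intro DERIV_diff DERIV_cdivide DERIV_mult pow DERIV_ln_divide that)
    moreover have "(c * y ^ p * ln y + 1 / y * y ^ Suc p) / c - c * y ^ p / c\<^sup>2 = y ^ p * ln y"
      using that c by (simp add: field_simps power2_eq_square)
    ultimately show ?thesis by simp
  qed
  ultimately have "((\<lambda>y. y ^ p * ln y) has_integral F 1 - F 0) {0..1}"
    by (intro fundamental_theorem_of_calculus_interior)
       (auto simp: has_real_derivative_iff_has_vector_derivative[symmetric])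
  thus ?thesis by (simp add: F_def c_def)
qed

lemma sums_of_has_integral_nonneg:
  fixes f :: "nat \<Rightarrow> 'a::euclidean_space \<Rightarrow> real"
  assumes nonneg: "\<And>k x. x \<in> S \<Longrightarrow> 0 \<le> f k x"
    and f: "\<And>k. (f k has_integral a k) S"
    and pointwise: "\<And>x. x \<in> S \<Longrightarrow> (\<lambda>k. f k x) sums g x"
    and g: "(g has_integral G) S"
  shows "a sums G"
proof -
  define F where "F N x = (\<Sum>k<N. f k x)" for N x
  have F: "(F N has_integral (\<Sum>k<N. a k)) S" for N
    unfolding F_def by (intro has_integral_sum f finite_lessThan)
  have mono: "F N x \<le> F (Suc N) x" if "x \<in> S" for N x
    using nonneg[OF that] by (simp add: F_def)
  have lim: "(\<lambda>N. F N x) \<longlonglongrightarrow> g x" if "x \<in> S" for x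
    using pointwise[OF that] by (simp add: sums_def F_def)
  have "(\<Sum>k<N. a k) \<le> G" for N
  proof (rule has_integral_le[OF F g])
    fix x assume x: "x \<in> S"
    have "incseq (\<lambda>N. F N x)" by (rule incseq_SucI) (rule mono[OF x])
    thus "F N x \<le> g x" using lim[OF x] by (rule incseq_le)
  qed
  moreover have "0 \<le> (\<Sum>k<N. a k)" for N
    using F by (rule has_integral_nonneg) (simp add: F_def nonneg sum_nonneg)
  ultimately have "bounded (range (\<lambda>N. integral S (F N)))"
    unfolding bounded_iff integral_unique[OF F] by (auto intro!: exI[of _ G])
  from monotone_convergence_increasing[OF has_integral_integrable[OF F] mono lim this]
  have "(\<lambda>N. integral S (F N)) \<longlonglongrightarrow> integral S g" ..
  thus ?thesis
    unfolding sums_def integral_unique[OF F] integral_unique[OF g] .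
qed

lemma sums_swap_nonneg:
  fixes a :: "nat \<Rightarrow> nat \<Rightarrow> real"
  assumes nonneg: "\<And>j k. 0 \<le> a j k"
    and rows: "\<And>j. (\<lambda>k. a j k) sums b j"
    and total: "b sums B"
  shows "(\<lambda>k. \<Sum>j. a j k) sums B"
proof -
  have rows': "((\<lambda>k. a j k) has_sum b j) UNIV" for j
    using rows nonneg by (rule sums_nonneg_imp_has_sum)
  have "0 \<le> b j" for j
    using rows'[of j] nonneg by (rule has_sum_nonneg)
  with total have total': "(b has_sum B) UNIV"
    by (rule sums_nonneg_imp_has_sum)
  have "(\<lambda>(j, k). a j k) summable_on UNIV \<times> UNIV"
    using rows' has_sum_imp_summable[OF total'] nonneg
    by (rule summable_on_SigmaI[where f = "\<lambda>(j, k). a j k", simplified])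
  with rows' total' have "((\<lambda>(j, k). a j k) has_sum B) (UNIV \<times> UNIV)"
    by (rule has_sum_SigmaI[where f = "\<lambda>(j, k). a j k", simplified])
  hence swapped: "((\<lambda>(k, j). a j k) has_sum B) (UNIV \<times> UNIV)"
    using has_sum_swap[where f = "\<lambda>(j, k). a j k" and S = B and A = UNIV and B = UNIV] by simp
  have columns: "((\<lambda>j. a j k) has_sum (\<Sum>j. a j k)) UNIV" for k
  proof -
    have "(\<lambda>j. a j k) summable_on UNIV"
      using has_sum_imp_summable[OF swapped] by (rule summable_on_SigmaD1) simp
    hence "((\<lambda>j. a j k) has_sum infsum (\<lambda>j. a j k) UNIV) UNIV"
      by (rule has_sum_infsum)
    moreover from this have "(\<Sum>j. a j k) = infsum (\<lambda>j. a j k) UNIV"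
      by (rule sums_unique[OF has_sum_imp_sums, symmetric])
    ultimately show ?thesis by (simp only:)
  qed
  have "((\<lambda>k. \<Sum>j. a j k) has_sum B) UNIV"
    by (rule has_sum_SigmaD[OF swapped]) (simp add: columns)
  thus ?thesis by (rule has_sum_imp_sums)
qed

lemma summable_inverse_squares: "summable (\<lambda>k. 1 / (real (Suc k))\<^sup>2)"
  using inverse_squares_sums by (simp add: sums_iff add.commute)

lemma abs_power_sin_div_square_le:
  fixes y t :: real
  assumes "\<bar>y\<bar> \<le> 1"
  shows "\<bar>y ^ b * sin t / (real (Suc k))\<^sup>2\<bar> \<le> 1 / (real (Suc k))\<^sup>2"
proof -
  have "\<bar>y ^ b * sin t\<bar> \<le> 1"
    using assms abs_sin_le_one[of t] by (auto simp: abs_mult power_abs intro!: mult_le_one power_le_one)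
  thus ?thesis by (simp add: abs_mult divide_right_mono del: of_nat_Suc)
qed

lemma cos_series_sums_ln:
  fixes r \<theta> :: real
  assumes "0 \<le> r" "r < 1"
  shows "(\<lambda>k. r ^ Suc k * cos (real (Suc k) * \<theta>) / real (Suc k))
           sums (- ln (1 - 2 * r * cos \<theta> + r\<^sup>2) / 2)"
proof -
  define w where "w = rcis r \<theta>"
  have "cmod w < 1" using assms by (simp add: w_def)
  hence w: "cmod w < 1" "1 - w \<noteq> 0" by auto
  have "(\<lambda>k. - (w ^ k) / of_nat k) sums ln (1 - w)"
    using Ln_series'[of "- w"] w by simp
  hence "(\<lambda>k. Re (- (w ^ k) / of_nat k)) sums Re (ln (1 - w))" by (rule sums_Re)
  hence "(\<lambda>k. - (r ^ k * cos (real k * \<theta>)) / real k) sums ln (cmod (1 - w))"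
    using w by (simp add: w_def DeMoivre2)
  hence "(\<lambda>k. r ^ Suc k * cos (real (Suc k) * \<theta>) / real (Suc k)) sums (- ln (cmod (1 - w)))"
    by (subst sums_Suc_iff) (auto dest: sums_minus)
  moreover have "(cmod (1 - w))\<^sup>2 = 1 - 2 * r * cos \<theta> + r\<^sup>2"
  proof -
    have "(cmod (1 - w))\<^sup>2 = (1 - r * cos \<theta>)\<^sup>2 + (r * sin \<theta>)\<^sup>2"
      by (simp add: cmod_power2 w_def)
    also have "\<dots> = 1 - 2 * r * cos \<theta> + r\<^sup>2 * ((sin \<theta>)\<^sup>2 + (cos \<theta>)\<^sup>2)"
      by algebra
    finally show ?thesis by simp
  qed
  moreover have "ln ((cmod (1 - w))\<^sup>2) = 2 * ln (cmod (1 - w))"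
    using w by (simp add: ln_realpow)
  ultimately show ?thesis by simp
qed

lemma ln_one_minus_series:
  fixes q :: real
  assumes "\<bar>q\<bar> < 1"
  shows "(\<lambda>n. q ^ Suc n / real (Suc n)) sums (- ln (1 - q))"
proof -
  have "(\<lambda>n. - ((-(-q)) ^ n) / of_nat n) sums ln (1 + (-q))"
    using assms by (intro ln_series') simp
  hence "(\<lambda>n. q ^ n / real n) sums (- ln (1 - q))"
    using sums_minus by fastforce
  thus ?thesis by (subst sums_Suc_iff) simp
qed

lemma rzeta_sums:
  assumes "2 \<le> p"
  shows "(\<lambda>k. 1 / real (Suc k) ^ p) sums rzeta (real p)"
proof -
  have "summable (\<lambda>k. 1 / real (Suc k) ^ p)"
  proof (rule summable_comparison_test'[OF summable_inverse_squares])
    show "norm (1 / real (Suc k) ^ p) \<le> 1 / (real (Suc k))\<^sup>2" for k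
      using power_increasing[OF assms, of "real (Suc k)"] by (simp add: divide_simps del: of_nat_Suc)
  qed
  thus ?thesis unfolding rzeta_def by (simp add: powr_realpow summable_sums)
qed

lemma rzeta_nonneg:
  assumes "2 \<le> p"
  shows "0 \<le> rzeta (real p)"
  using sums_le[OF _ sums_zero rzeta_sums[OF assms]] by simp

lemma rzeta_sums_scaled:
  assumes "1 \<le> p"
  shows "(\<lambda>k. 2 * pi * (1 / (2 * pi * real (Suc k))) ^ (p + 1)) sums (rzeta (real p + 1) / (2 * pi) ^ p)"
proof -
  have "(\<lambda>k. 1 / (2 * pi) ^ p * (1 / real (Suc k) ^ (p + 1))) sums (1 / (2 * pi) ^ p * rzeta (real (p + 1)))"
    using assms by (intro sums_mult rzeta_sums) auto
  moreover have "2 * pi * (1 / (2 * pi * real (Suc k))) ^ (p + 1)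
      = 1 / (2 * pi) ^ p * (1 / real (Suc k) ^ (p + 1))" for k
    by (simp add: power_mult_distrib field_simps del: of_nat_Suc)
  ultimately show ?thesis by (simp add: add.commute)
qed

section \<open>The Clausen function\<close>

text \<open>\<open>clausen y\<close> is the Clausen function \<open>Cl\<^sub>2(2\<pi>y)\<close>. Its Abel mean \<open>clausen_abel r\<close>
  can be differentiated termwise for \<open>r < 1\<close>, with derivative \<open>-\<pi> ln (1 - 2r cos (2\<pi>y) + r\<^sup>2)\<close>
  (the "Abel kernel" below); dominated convergence as \<open>r \<rightarrow> 1\<close> then gives the derivative of
  \<open>clausen\<close>.\<close>

definition clausen_abel :: "real \<Rightarrow> real \<Rightarrow> real" where
  "clausen_abel r y = (\<Sum>k. r ^ Suc k * sin (2 * pi * real (Suc k) * y) / (real (Suc k))\<^sup>2)"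

definition clausen :: "real \<Rightarrow> real" where
  "clausen y = (\<Sum>k. sin (2 * pi * real (Suc k) * y) / (real (Suc k))\<^sup>2)"

lemma clausen_abel_has_real_derivative:
  fixes r y :: real
  assumes r: "0 \<le> r" "r < 1"
  shows "(clausen_abel r has_real_derivative (- pi * ln (1 - 2 * r * cos (2 * pi * y) + r\<^sup>2))) (at y)"
proof -
  define f where "f k y = r ^ Suc k * sin (2 * pi * real (Suc k) * y) / (real (Suc k))\<^sup>2" for k y
  define f' where "f' k y = 2 * pi * (r ^ Suc k * cos (real (Suc k) * (2 * pi * y)) / real (Suc k))" for k y
  have "(f k has_field_derivative f' k x) (at x within UNIV)" for k x
    unfolding f_def f'_def
    by (auto intro!: derivative_eq_intros simp: power2_eq_square field_simps simp del: of_nat_Suc)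
  moreover have "uniformly_convergent_on UNIV (\<lambda>n x. \<Sum>i<n. f' i x)"
  proof (rule Weierstrass_m_test')
    show "norm (f' k x) \<le> 2 * pi * r ^ Suc k" for k x
    proof -
      have "\<bar>cos (real (Suc k) * (2 * pi * x))\<bar> \<le> real (Suc k)"
        by (rule order_trans[OF abs_cos_le_one]) simp
      hence "\<bar>cos (real (Suc k) * (2 * pi * x))\<bar> / real (Suc k) \<le> 1"
        by (simp add: divide_le_eq del: of_nat_Suc)
      hence "r ^ Suc k * (\<bar>cos (real (Suc k) * (2 * pi * x))\<bar> / real (Suc k)) \<le> r ^ Suc k"
        using r by (intro mult_left_le) auto
      hence "2 * pi * (r ^ Suc k * (\<bar>cos (real (Suc k) * (2 * pi * x))\<bar> / real (Suc k)))
          \<le> 2 * pi * r ^ Suc k"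
        by (intro mult_left_mono) auto
      thus ?thesis using r unfolding f'_def by (simp add: abs_mult)
    qed
    show "summable (\<lambda>k. 2 * pi * r ^ Suc k)"
      using r by (intro summable_mult summable_geometric summable_Suc_iff[THEN iffD2]) auto
  qed
  moreover have "summable (\<lambda>k. f k 0)" by (simp add: f_def)
  ultimately have "((\<lambda>x. \<Sum>k. f k x) has_field_derivative (\<Sum>k. f' k y)) (at y)"
    by (intro has_field_derivative_series'(2)[OF convex_UNIV]) auto
  moreover have "(\<lambda>k. f' k y) sums (2 * pi * (- ln (1 - 2 * r * cos (2 * pi * y) + r\<^sup>2) / 2))"
    unfolding f'_def by (intro sums_mult cos_series_sums_ln r)
  ultimately show ?thesis by (simp add: sums_iff f_def clausen_abel_def[abs_def])
qed

lemma clausen_abel_tendsto_clausen: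
  assumes "\<And>n. r n \<in> {0..1}" and "r \<longlonglongrightarrow> 1"
  shows "(\<lambda>n. clausen_abel (r n) y) \<longlonglongrightarrow> clausen y"
proof -
  define f where "f k r = r ^ Suc k * sin (2 * pi * real (Suc k) * y) / (real (Suc k))\<^sup>2" for k r
  have "uniform_limit {0..1} (\<lambda>n r. \<Sum>k<n. f k r) (\<lambda>r. \<Sum>k. f k r) sequentially"
  proof (rule Weierstrass_m_test[OF _ summable_inverse_squares])
    show "norm (f k r) \<le> 1 / (real (Suc k))\<^sup>2" if "r \<in> {0..1}" for k r
      using that unfolding f_def real_norm_def by (intro abs_power_sin_div_square_le) auto
  qed
  hence "continuous_on {0..1} (\<lambda>r. \<Sum>k. f k r)"
    by (rule uniform_limit_theorem[rotated])
       (auto simp: f_def intro!: continuous_intros always_eventually)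
  from continuous_on_tendsto_compose[OF this assms(2)] assms(1) show ?thesis
    by (simp add: f_def clausen_abel_def clausen_def)
qed

lemma uniform_limit_power_clausen:
  "uniform_limit {0..1} (\<lambda>n y. \<Sum>k<n. y ^ b * sin (2 * pi * real (Suc k) * y) / (real (Suc k))\<^sup>2)
     (\<lambda>y. y ^ b * clausen y) sequentially"
proof -
  define f where "f k y = y ^ b * sin (2 * pi * real (Suc k) * y) / (real (Suc k))\<^sup>2" for k y
  have "uniform_limit {0..1} (\<lambda>n y. \<Sum>k<n. f k y) (\<lambda>y. \<Sum>k. f k y) sequentially"
  proof (rule Weierstrass_m_test[OF _ summable_inverse_squares])
    show "norm (f k y) \<le> 1 / (real (Suc k))\<^sup>2" if "y \<in> {0..1}" for k y
      using that unfolding f_def real_norm_def by (intro abs_power_sin_div_square_le) auto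
  qed
  moreover have "(\<Sum>k. f k y) = y ^ b * clausen y" for y
  proof -
    have "summable (\<lambda>k. sin (2 * pi * real (Suc k) * y) / (real (Suc k))\<^sup>2)"
      by (rule summable_comparison_test'[OF summable_inverse_squares])
         (use abs_power_sin_div_square_le[of 1 0] in simp)
    hence "(\<lambda>k. y ^ b * (sin (2 * pi * real (Suc k) * y) / (real (Suc k))\<^sup>2)) sums (y ^ b * clausen y)"
      unfolding clausen_def by (intro sums_mult summable_sums)
    thus ?thesis
      unfolding f_def by (simp add: sums_iff)
  qed
  ultimately show ?thesis by (simp add: f_def)
qed

lemma continuous_on_clausen: "continuous_on {0..1} clausen"
proof -
  have "continuous_on {0..1} (\<lambda>y. y ^ 0 * clausen y)"
    by (rule uniform_limit_theorem[OF _ uniform_limit_power_clausen])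
       (auto intro!: continuous_intros always_eventually)
  thus ?thesis by simp
qed

lemma clausen_0: "clausen 0 = 0"
  by (simp add: clausen_def)

lemma clausen_1: "clausen 1 = 0"
proof -
  have "sin (2 * pi * real (Suc k) * 1) = 0" for k
    using sin_npi[of "2 * Suc k"] by (simp add: mult_ac)
  thus ?thesis by (simp add: clausen_def)
qed

lemma abs_ln_abel_kernel_le:
  fixes r t :: real
  assumes "1/2 \<le> r" "r \<le> 1" "sin (pi * t) \<noteq> 0"
  shows "\<bar>ln (1 - 2 * r * cos (2 * pi * t) + r\<^sup>2)\<bar> \<le> ln 4 + \<bar>ln (2 * (sin (pi * t))\<^sup>2)\<bar>"
proof -
  define s where "s = (sin (pi * t))\<^sup>2"
  define q where "q = 1 - 2 * r * cos (2 * pi * t) + r\<^sup>2"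
  have c: "cos (2 * pi * t) = 1 - 2 * s"
    using cos_double_sin[of "pi * t"] by (simp add: s_def mult.assoc)
  have "q = (1 - r)\<^sup>2 + 4 * r * s"
    unfolding q_def c by (simp add: power2_eq_square algebra_simps)
  moreover have s: "0 < s" "s \<le> 1"
    using assms(3) abs_sin_le_one[of "pi * t"] by (auto simp: s_def abs_square_le_1)
  moreover have "2 * s \<le> 4 * r * s" "4 * r * s \<le> 4 * r"
    using assms(1,2) s by (auto intro!: mult_right_mono mult_left_le)
  moreover have "(1 - r)\<^sup>2 + 4 * r = (1 + r)\<^sup>2"
    by (simp add: power2_eq_square algebra_simps)
  moreover have "(1 + r)\<^sup>2 \<le> 4"
    using assms(1,2) power_mono[of "1 + r" 2 2] by simp
  ultimately have q: "2 * s \<le> q" "q \<le> 4"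
    using zero_le_power2[of "1 - r"] by linarith+
  show ?thesis
  proof (cases "1 \<le> q")
    case True
    hence "0 \<le> ln q" "ln q \<le> ln 4" using q by auto
    thus ?thesis unfolding q_def[symmetric] s_def[symmetric] by arith
  next
    case False
    hence "ln q < 0" "ln (2 * s) \<le> ln q" "0 \<le> ln (4::real)" using q s by auto
    thus ?thesis unfolding q_def[symmetric] s_def[symmetric] by arith
  qed
qed

lemma ln_abel_kernel_tendsto:
  fixes t :: real
  assumes "0 < sin (pi * t)" and "r \<longlonglongrightarrow> 1"
  shows "(\<lambda>n. - pi * ln (1 - 2 * r n * cos (2 * pi * t) + (r n)\<^sup>2))
           \<longlonglongrightarrow> - 2 * pi * ln (2 * sin (pi * t))"
proof -
  have "(\<lambda>n. 1 - 2 * r n * cos (2 * pi * t) + (r n)\<^sup>2) \<longlonglongrightarrow> 1 - 2 * 1 * cos (2 * pi * t) + 1\<^sup>2"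
    by (intro tendsto_intros assms(2))
  also have "1 - 2 * 1 * cos (2 * pi * t) + 1\<^sup>2 = (2 * sin (pi * t))\<^sup>2"
    using cos_double_sin[of "pi * t"] by (simp add: mult.assoc power2_eq_square)
  finally have "(\<lambda>n. - pi * ln (1 - 2 * r n * cos (2 * pi * t) + (r n)\<^sup>2))
      \<longlonglongrightarrow> - pi * ln ((2 * sin (pi * t))\<^sup>2)"
    using assms(1) by (intro tendsto_intros) auto
  also have "- pi * ln ((2 * sin (pi * t))\<^sup>2) = - 2 * pi * ln (2 * sin (pi * t))"
    using assms(1) by (subst ln_realpow) auto
  finally show ?thesis .
qed

lemma clausen_diff_has_integral:
  assumes "0 < a" "a \<le> b" "b < 1"
  shows "((\<lambda>t. - 2 * pi * ln (2 * sin (pi * t))) has_integral (clausen b - clausen a)) {a..b}"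
proof -
  define r :: "nat \<Rightarrow> real" where "r n = 1 - 1 / (real n + 2)" for n
  have r: "1/2 \<le> r n" "r n < 1" for n
    unfolding r_def by (auto simp: field_simps)
  have "(\<lambda>n. 1 / (real n + 2)) \<longlonglongrightarrow> 0"
    by real_asymp
  hence r_lim: "r \<longlonglongrightarrow> 1"
    unfolding r_def[abs_def] using tendsto_diff[OF tendsto_const[of 1]] by fastforce
  define g where "g n t = - pi * ln (1 - 2 * r n * cos (2 * pi * t) + (r n)\<^sup>2)" for n t
  define h where "h t = pi * (ln 4 + \<bar>ln (2 * (sin (pi * t))\<^sup>2)\<bar>)" for t
  have sin_pos: "0 < sin (pi * t)" if "t \<in> {a..b}" for t
    using that assms by (intro sin_gt_zero) auto
  have g_int: "(g n has_integral (clausen_abel (r n) b - clausen_abel (r n) a)) {a..b}" for n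
    unfolding g_def using r[of n] assms(2)
    by (intro has_integral_of_real_derivative clausen_abel_has_real_derivative) auto
  have g_integrable: "g n integrable_on {a..b}" for n
    using g_int by blast
  have h_integrable: "h integrable_on {a..b}"
    unfolding h_def using sin_pos
    by (intro integrable_continuous_interval continuous_intros) force
  have dominated: "norm (g n t) \<le> h t" if "t \<in> {a..b}" for n t
    using abs_ln_abel_kernel_le[of "r n" t] r[of n] sin_pos[OF that]
    unfolding g_def h_def by (simp add: abs_mult)
  have pointwise: "(\<lambda>n. g n t) \<longlonglongrightarrow> - 2 * pi * ln (2 * sin (pi * t))" if "t \<in> {a..b}" for t
    unfolding g_def using sin_pos[OF that] r_lim by (rule ln_abel_kernel_tendsto)
  note dc = dominated_convergence[OF g_integrable h_integrable dominated pointwise]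
  have "(\<lambda>n. clausen_abel (r n) y) \<longlonglongrightarrow> clausen y" for y
  proof (rule clausen_abel_tendsto_clausen[OF _ r_lim])
    show "r n \<in> {0..1}" for n using r[of n] by simp
  qed
  hence "(\<lambda>n. clausen_abel (r n) b - clausen_abel (r n) a) \<longlonglongrightarrow> clausen b - clausen a"
    by (intro tendsto_diff)
  hence "(\<lambda>n. integral {a..b} (g n)) \<longlonglongrightarrow> clausen b - clausen a"
    by (simp add: integral_unique[OF g_int])
  with dc(2) have "integral {a..b} (\<lambda>t. - 2 * pi * ln (2 * sin (pi * t))) = clausen b - clausen a"
    by (rule LIMSEQ_unique)
  with dc(1) show ?thesis
    using has_integral_integral by metis
qed

lemma clausen_has_real_derivative:
  assumes "0 < y" "y < 1"
  shows "(clausen has_real_derivative (- 2 * pi * ln (2 * sin (pi * y)))) (at y)"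
proof -
  define a where "a = y / 2"
  define b where "b = (1 + y) / 2"
  define G where "G t = - 2 * pi * ln (2 * sin (pi * t))" for t
  have ab: "0 < a" "a < y" "y < b" "b < 1" using assms by (auto simp: a_def b_def)
  have "continuous_on {a..b} G"
    unfolding G_def
  proof (intro continuous_intros ballI)
    fix t assume "t \<in> {a..b}"
    hence "0 < sin (pi * t)" using ab by (intro sin_gt_zero) auto
    thus "2 * sin (pi * t) \<noteq> 0" by simp
  qed
  hence "((\<lambda>x. integral {a..x} G) has_real_derivative G y) (at y within {a..b})"
    using ab by (intro integral_has_real_derivative) auto
  hence "((\<lambda>x. integral {a..x} G) has_real_derivative G y) (at y)"
    using ab by (simp add: at_within_Icc_at)
  hence "((\<lambda>x. clausen a + integral {a..x} G) has_real_derivative G y) (at y)"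
    by (auto intro!: derivative_eq_intros)
  moreover have "open {a<..<b}" "y \<in> {a<..<b}" using ab by auto
  moreover have "clausen a + integral {a..x} G = clausen x" if "x \<in> {a<..<b}" for x
  proof -
    have "(G has_integral clausen x - clausen a) {a..x}"
      unfolding G_def using that ab by (intro clausen_diff_has_integral) auto
    thus ?thesis by (simp add: integral_unique)
  qed
  ultimately show ?thesis
    unfolding G_def by (rule has_field_derivative_transform_within_open)
qed

section \<open>Moments of \<open>ln (2 sin (\<pi> y))\<close>\<close>

lemma ln_sin_moment_by_parts:
  "((\<lambda>y. y ^ p * ln (2 * sin (pi * y))) has_integral
      (real p / (2 * pi) * integral {0..1} (\<lambda>y. y ^ (p - 1) * clausen y))) {0..1}"
proof -
  define H where "H y = - (1 / (2 * pi)) * (y ^ p * clausen y)" for y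
  define D where "D y = - (1 / (2 * pi)) *
    (real p * y ^ (p - 1) * clausen y + y ^ p * (- 2 * pi * ln (2 * sin (pi * y))))" for y
  have "(D has_integral (H 1 - H 0)) {0..1}"
  proof (rule fundamental_theorem_of_calculus_interior)
    show "continuous_on {0..1} H"
      unfolding H_def using continuous_on_clausen by (intro continuous_intros)
    show "(H has_vector_derivative D y) (at y)" if "y \<in> {0<..<1}" for y
      unfolding H_def D_def has_real_derivative_iff_has_vector_derivative[symmetric] using that
      by (auto intro!: derivative_eq_intros clausen_has_real_derivative simp: field_simps)
  qed simp
  hence "(D has_integral 0) {0..1}" by (simp add: H_def clausen_0 clausen_1)
  moreover have "((\<lambda>y. real p / (2 * pi) * (y ^ (p - 1) * clausen y)) has_integral
       (real p / (2 * pi) * integral {0..1} (\<lambda>y. y ^ (p - 1) * clausen y))) {0..1}"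
    using continuous_on_clausen
    by (intro has_integral_mult_right integrable_integral integrable_continuous_interval continuous_intros)
  ultimately have "((\<lambda>y. D y + real p / (2 * pi) * (y ^ (p - 1) * clausen y)) has_integral
       (0 + real p / (2 * pi) * integral {0..1} (\<lambda>y. y ^ (p - 1) * clausen y))) {0..1}"
    by (rule has_integral_add)
  moreover have "D y + real p / (2 * pi) * (y ^ (p - 1) * clausen y) = y ^ p * ln (2 * sin (pi * y))" for y
    unfolding D_def by (simp add: field_simps)
  ultimately show ?thesis by simp
qed

text \<open>For \<open>w = 1/u\<close> a nonzero multiple of \<open>2\<pi>\<close>, \<open>trig_moments b u\<close> is the pair
  \<open>(\<integral>\<^sub>0\<^sup>1 y\<^sup>b sin (w y) dy, \<integral>\<^sub>0\<^sup>1 y\<^sup>b cos (w y) dy)\<close>; the recursion is integration by parts.\<close>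

fun trig_moments :: "nat \<Rightarrow> real \<Rightarrow> real \<times> real" where
  "trig_moments 0 u = (0, 0)"
| "trig_moments (Suc b) u =
     (- u + real (Suc b) * u * snd (trig_moments b u), - real (Suc b) * u * fst (trig_moments b u))"

lemma trig_moments_has_integral:
  fixes w :: real
  assumes w: "sin w = 0" "cos w = 1" "w \<noteq> 0"
  shows "((\<lambda>y. y ^ b * sin (w * y)) has_integral fst (trig_moments b (1 / w))) {0..1}
       \<and> ((\<lambda>y. y ^ b * cos (w * y)) has_integral snd (trig_moments b (1 / w))) {0..1}"
proof (induction b)
  case 0
  have "((\<lambda>y. sin (w * y)) has_integral (- cos (w * 1) / w - - cos (w * 0) / w)) {0..1}"
    using w by (intro has_integral_of_real_derivative) (auto intro!: derivative_eq_intros)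
  moreover have "((\<lambda>y. cos (w * y)) has_integral (sin (w * 1) / w - sin (w * 0) / w)) {0..1}"
    using w by (intro has_integral_of_real_derivative) (auto intro!: derivative_eq_intros)
  ultimately show ?case using w by simp
next
  case (Suc b)
  define c where "c = real (Suc b) / w"
  define F where "F y = - (y ^ Suc b * cos (w * y)) / w" for y
  define G where "G y = y ^ Suc b * sin (w * y) / w" for y
  have "((\<lambda>y. - (real (Suc b) * y ^ b * cos (w * y)) / w + y ^ Suc b * sin (w * y))
      has_integral (F 1 - F 0)) {0..1}"
    unfolding F_def using w
    by (intro has_integral_of_real_derivative)
      (auto intro!: derivative_eq_intros simp: field_simps simp del: power_Suc)
  from has_integral_add[OF this has_integral_mult_right[OF Suc.IH[THEN conjunct2], of c]]
  have sin_moment: "((\<lambda>y. y ^ Suc b * sin (w * y)) has_integral fst (trig_moments (Suc b) (1 / w))) {0..1}"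
    unfolding c_def F_def using w by (simp add: field_simps)
  have "((\<lambda>y. real (Suc b) * y ^ b * sin (w * y) / w + y ^ Suc b * cos (w * y))
      has_integral (G 1 - G 0)) {0..1}"
    unfolding G_def using w
    by (intro has_integral_of_real_derivative)
      (auto intro!: derivative_eq_intros simp: field_simps simp del: power_Suc)
  note cos_diff = has_integral_diff[OF this has_integral_mult_right[OF Suc.IH[THEN conjunct1], of c]]
  have "G 1 - G 0 - c * fst (trig_moments b (1 / w)) = snd (trig_moments (Suc b) (1 / w))"
    unfolding c_def G_def using w by (simp add: field_simps)
  with cos_diff have "((\<lambda>y. real (Suc b) * y ^ b * sin (w * y) / w + y ^ Suc b * cos (w * y)
      - c * (y ^ b * sin (w * y))) has_integral snd (trig_moments (Suc b) (1 / w))) {0..1}"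
    by (simp only:)
  moreover have "real (Suc b) * y ^ b * sin (w * y) / w + y ^ Suc b * cos (w * y)
      - c * (y ^ b * sin (w * y)) = y ^ Suc b * cos (w * y)" for y
    unfolding c_def by simp
  ultimately have "((\<lambda>y. y ^ Suc b * cos (w * y)) has_integral snd (trig_moments (Suc b) (1 / w))) {0..1}"
    by (simp only:)
  with sin_moment show ?case ..
qed

lemma clausen_moment_sums:
  "(\<lambda>k. fst (trig_moments b (1 / (2 * pi * real (Suc k)))) / (real (Suc k))\<^sup>2)
     sums integral {0..1} (\<lambda>y. y ^ b * clausen y)"
proof -
  define f where "f k y = y ^ b * sin (2 * pi * real (Suc k) * y) / (real (Suc k))\<^sup>2" for k y
  have "continuous_on {0..1} (\<lambda>y. \<Sum>k<n. f k y)" for n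
    unfolding f_def by (intro continuous_intros) auto
  then obtain I J where
    I: "\<And>n. ((\<lambda>y. \<Sum>k<n. f k y) has_integral I n) {0..1}" and
    J: "((\<lambda>y. y ^ b * clausen y) has_integral J) {0..1}" and
    lim: "I \<longlonglongrightarrow> J"
    using uniform_limit_integral[OF uniform_limit_power_clausen[of b, folded f_def]] by auto
  have partial: "((\<lambda>y. \<Sum>k<n. f k y) has_integral
      (\<Sum>k<n. fst (trig_moments b (1 / (2 * pi * real (Suc k)))) / (real (Suc k))\<^sup>2)) {0..1}" for n
  proof (unfold f_def, intro has_integral_sum finite_lessThan has_integral_divide)
    fix k
    have "sin (2 * pi * real (Suc k)) = 0" "cos (2 * pi * real (Suc k)) = 1"
      using sin_integer_2pi cos_integer_2pi Ints_of_nat by blast+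
    thus "((\<lambda>y. y ^ b * sin (2 * pi * real (Suc k) * y)) has_integral
        fst (trig_moments b (1 / (2 * pi * real (Suc k))))) {0..1}"
      using trig_moments_has_integral[of "2 * pi * real (Suc k)" b] by simp
  qed
  have "I = (\<lambda>n. \<Sum>k<n. fst (trig_moments b (1 / (2 * pi * real (Suc k)))) / (real (Suc k))\<^sup>2)"
    using has_integral_unique[OF I partial] by blast
  with lim show ?thesis
    unfolding sums_def integral_unique[OF J] by simp
qed

definition sin_moment_poly :: "nat \<Rightarrow> real \<Rightarrow> real" where
  "sin_moment_poly m u = fact (m - 1) * (\<Sum>j=1..(m - 1) div 2. (-1) ^ j * u ^ (2 * j + 1) / fact (m - 2 * j))"

lemma sin_moment_poly_add_2:
  assumes "1 \<le> n"
  shows "sin_moment_poly (n + 2) u = - (real n + 1) * u ^ 3 - real n * (real n + 1) * u\<^sup>2 * sin_moment_poly n u"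
proof -
  define g where "g j = (-1) ^ j * u ^ (2 * j + 1) / fact (n + 2 - 2 * j)" for j
  define S where "S = (\<Sum>j=1..(n - 1) div 2. (-1) ^ j * u ^ (2 * j + 1) / fact (n - 2 * j))"
  have "(n + 2 - 1) div 2 = Suc ((n - 1) div 2)" using assms by simp
  hence "(\<Sum>j=1..(n + 2 - 1) div 2. g j) = g 1 + (\<Sum>j=Suc 1..Suc ((n - 1) div 2). g j)"
    by (simp add: sum.atLeast_Suc_atMost)
  also have "(\<Sum>j=Suc 1..Suc ((n - 1) div 2). g j) = (\<Sum>j=1..(n - 1) div 2. g (Suc j))"
    by (rule sum.shift_bounds_cl_Suc_ivl)
  also have "\<dots> = - u\<^sup>2 * S"
    unfolding S_def sum_distrib_left
    by (intro sum.cong) (auto simp: g_def power2_eq_square power_add field_simps)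
  finally have sum_eq: "(\<Sum>j=1..(n + 2 - 1) div 2. g j) = g 1 - u\<^sup>2 * S"
    by simp
  have "fact (n + 2 - 1) = (real n + 1) * real n * (fact (n - 1) :: real)"
    using assms by (cases n) (simp_all add: algebra_simps)
  moreover have "fact (n + 2 - 1) * g 1 = - (real n + 1) * u ^ 3"
    by (simp add: g_def field_simps numeral_3_eq_3)
  moreover have "sin_moment_poly (n + 2) u = fact (n + 2 - 1) * (\<Sum>j=1..(n + 2 - 1) div 2. g j)"
    unfolding sin_moment_poly_def g_def ..
  ultimately show ?thesis
    unfolding sum_eq sin_moment_poly_def S_def[symmetric] by (simp add: algebra_simps)
qed

lemma sin_moment_poly_eq:
  "real (Suc b) * u\<^sup>2 * fst (trig_moments b u) = sin_moment_poly (b + 2) u"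
proof (induction b rule: nat_induct2)
  case 0
  show ?case by (simp add: sin_moment_poly_def)
next
  case 1
  show ?case by (simp add: sin_moment_poly_def numeral_3_eq_3 power2_eq_square)
next
  case (step b)
  have "real (Suc (b + 2)) * u\<^sup>2 * fst (trig_moments (b + 2) u)
      = - (real (b + 2) + 1) * u ^ 3 - real (b + 2) * (real (b + 2) + 1) * u\<^sup>2
          * (real (Suc b) * u\<^sup>2 * fst (trig_moments b u))"
    by (simp add: numeral_2_eq_2 numeral_3_eq_3 power2_eq_square algebra_simps)
  also have "\<dots> = sin_moment_poly (b + 2 + 2) u"
    unfolding step.IH by (rule sin_moment_poly_add_2[symmetric]) simp
  finally show ?case .
qed

definition ln_sin_moment :: "nat \<Rightarrow> real" where
  "ln_sin_moment m = fact (m - 1) *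
     (\<Sum>j=1..(m - 1) div 2. (-1) ^ j * rzeta (2 * real j + 1) / (fact (m - 2 * j) * (2 * pi) ^ (2 * j)))"

lemma sin_moment_poly_sums:
  "(\<lambda>k. 2 * pi * sin_moment_poly m (1 / (2 * pi * real (Suc k)))) sums ln_sin_moment m"
proof -
  have "(\<lambda>k. \<Sum>j=1..(m - 1) div 2.
          (-1) ^ j / fact (m - 2 * j) * (2 * pi * (1 / (2 * pi * real (Suc k))) ^ (2 * j + 1)))
      sums (\<Sum>j=1..(m - 1) div 2. (-1) ^ j / fact (m - 2 * j) * (rzeta (real (2 * j) + 1) / (2 * pi) ^ (2 * j)))"
    by (intro sums_sum sums_mult rzeta_sums_scaled) auto
  from sums_mult[OF this, of "fact (m - 1)"] show ?thesis
    unfolding sin_moment_poly_def ln_sin_moment_def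
    by (simp add: sum_distrib_left mult_ac)
qed

lemma ln_sin_moment_has_integral:
  assumes "1 \<le> m"
  shows "((\<lambda>y. y ^ (m - 1) * ln (2 * sin (pi * y))) has_integral ln_sin_moment m) {0..1}"
proof -
  define u where "u k = 1 / (2 * pi * real (Suc k))" for k
  have "(\<lambda>k. real (m - 1) / (2 * pi) * (fst (trig_moments (m - 2) (u k)) / (real (Suc k))\<^sup>2))
      sums (real (m - 1) / (2 * pi) * integral {0..1} (\<lambda>y. y ^ (m - 2) * clausen y))"
    unfolding u_def by (intro sums_mult clausen_moment_sums)
  moreover have "real (m - 1) / (2 * pi) * (fst (trig_moments (m - 2) (u k)) / (real (Suc k))\<^sup>2)
      = 2 * pi * sin_moment_poly m (u k)" for k
  proof (cases "m = 1")
    case True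
    thus ?thesis by (simp add: sin_moment_poly_def)
  next
    case False
    hence "real (m - 1) * (u k)\<^sup>2 * fst (trig_moments (m - 2) (u k)) = sin_moment_poly m (u k)"
      using assms sin_moment_poly_eq[of "m - 2" "u k"] by (simp add: Suc_diff_Suc numeral_2_eq_2)
    thus ?thesis
      unfolding u_def by (simp add: power2_eq_square field_simps del: of_nat_Suc)
  qed
  ultimately have "(\<lambda>k. 2 * pi * sin_moment_poly m (u k))
      sums (real (m - 1) / (2 * pi) * integral {0..1} (\<lambda>y. y ^ (m - 2) * clausen y))"
    by simp
  hence "real (m - 1) / (2 * pi) * integral {0..1} (\<lambda>y. y ^ (m - 2) * clausen y) = ln_sin_moment m"
    using sin_moment_poly_sums[of m] unfolding u_def by (rule sums_unique2)
  thus ?thesis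
    using ln_sin_moment_by_parts[of "m - 1"] by (simp add: numeral_2_eq_2)
qed

section \<open>The generating function of \<open>\<zeta>(2k)\<close>\<close>

lemma ln_sin_product_sums:
  fixes y :: real
  assumes "0 < y" "y < 1"
  shows "(\<lambda>j. - ln (1 - y\<^sup>2 / (real (Suc j))\<^sup>2)) sums ln (pi * y / sin (pi * y))"
proof -
  have sin_pos: "0 < sin (pi * y)" using assms by (intro sin_gt_zero) auto
  have factor_pos: "1 - y\<^sup>2 / (real k)\<^sup>2 > 0" if "1 \<le> k" for k
  proof -
    have "y\<^sup>2 < 1" using assms by (simp add: power_less_one_iff)
    also have "1 \<le> (real k)\<^sup>2" using that by simp
    finally have "y\<^sup>2 < (real k)\<^sup>2" .
    thus ?thesis using that by (simp add: divide_less_eq)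
  qed
  have "(\<lambda>n. \<Prod>k=1..n. 1 - y\<^sup>2 / (real k)\<^sup>2) \<longlonglongrightarrow> sin (pi * y) / (pi * y)"
    using assms by (intro sin_product_formula_real') auto
  hence "(\<lambda>n. ln (\<Prod>k=1..n. 1 - y\<^sup>2 / (real k)\<^sup>2)) \<longlonglongrightarrow> ln (sin (pi * y) / (pi * y))"
    using sin_pos assms by (intro tendsto_ln) auto
  moreover have "ln (\<Prod>k=1..n. 1 - y\<^sup>2 / (real k)\<^sup>2) = (\<Sum>j<n. ln (1 - y\<^sup>2 / (real (Suc j))\<^sup>2))" for n
    using factor_pos by (subst ln_prod) (force simp: sum.atLeast1_atMost_eq)+
  ultimately have "(\<lambda>j. ln (1 - y\<^sup>2 / (real (Suc j))\<^sup>2)) sums ln (sin (pi * y) / (pi * y))"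
    by (simp add: sums_def)
  hence "(\<lambda>j. - ln (1 - y\<^sup>2 / (real (Suc j))\<^sup>2)) sums (- ln (sin (pi * y) / (pi * y)))"
    by (rule sums_minus)
  thus ?thesis using sin_pos assms by (simp add: ln_div)
qed

lemma rzeta_even_ln_sin_sums:
  fixes y :: real
  assumes "0 < y" "y < 1"
  shows "(\<lambda>k. rzeta (2 * real (Suc k)) * y ^ (2 * Suc k) / real (Suc k)) sums ln (pi * y / sin (pi * y))"
proof -
  define a where "a j k = y ^ (2 * Suc k) / (real (Suc k) * real (Suc j) ^ (2 * Suc k))" for j k
  have "(\<lambda>k. a j k) sums (- ln (1 - y\<^sup>2 / (real (Suc j))\<^sup>2))" for j
  proof -
    have "y\<^sup>2 < 1" using assms by (simp add: power_less_one_iff)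
    also have "1 \<le> (real (Suc j))\<^sup>2" by simp
    finally have "\<bar>y\<^sup>2 / (real (Suc j))\<^sup>2\<bar> < 1" by (simp add: divide_less_eq)
    moreover have "(y\<^sup>2 / (real (Suc j))\<^sup>2) ^ Suc k / real (Suc k) = a j k" for k
      unfolding a_def by (simp only: power_divide power_mult) simp
    ultimately show ?thesis
      using ln_one_minus_series[of "y\<^sup>2 / (real (Suc j))\<^sup>2"] by (simp only:)
  qed
  from sums_swap_nonneg[OF _ this ln_sin_product_sums[OF assms]]
  have "(\<lambda>k. \<Sum>j. a j k) sums ln (pi * y / sin (pi * y))"
    using assms by (simp add: a_def)
  moreover have "(\<Sum>j. a j k) = rzeta (2 * real (Suc k)) * y ^ (2 * Suc k) / real (Suc k)" for k
  proof -
    have "(\<lambda>j. y ^ (2 * Suc k) / real (Suc k) * (1 / real (Suc j) ^ (2 * Suc k)))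
        sums (y ^ (2 * Suc k) / real (Suc k) * rzeta (real (2 * Suc k)))"
      by (intro sums_mult rzeta_sums) auto
    thus ?thesis by (simp add: a_def sums_iff mult_ac)
  qed
  ultimately show ?thesis by simp
qed

lemma ln_pi_div_sin_moment_has_integral:
  assumes "1 \<le> m"
  shows "((\<lambda>y. y ^ (m - 1) * ln (pi * y / sin (pi * y))) has_integral
           ln (2 * pi) / real m - 1 / (real m)\<^sup>2 - ln_sin_moment m) {0<..<1}"
proof -
  have "((\<lambda>y. ln (2 * pi) * y ^ (m - 1) + y ^ (m - 1) * ln y - y ^ (m - 1) * ln (2 * sin (pi * y)))
      has_integral ln (2 * pi) * (1 / (real (m - 1) + 1)) + - 1 / (real (m - 1) + 1)\<^sup>2 - ln_sin_moment m) {0..1}"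
    using assms by (intro has_integral_diff has_integral_add has_integral_mult_right
        power_has_integral_01 power_ln_has_integral_01 ln_sin_moment_has_integral)
  moreover have "real (m - 1) + 1 = real m" using assms by simp
  ultimately have integral: "((\<lambda>y. ln (2 * pi) * y ^ (m - 1) + y ^ (m - 1) * ln y
      - y ^ (m - 1) * ln (2 * sin (pi * y)))
      has_integral ln (2 * pi) / real m - 1 / (real m)\<^sup>2 - ln_sin_moment m) {0<..<1}"
    by (simp add: has_integral_Icc_iff_Ioo)
  have "ln (2 * pi) * y ^ (m - 1) + y ^ (m - 1) * ln y - y ^ (m - 1) * ln (2 * sin (pi * y))
      = y ^ (m - 1) * ln (pi * y / sin (pi * y))" if "y \<in> {0<..<1}" for y
  proof -
    have "0 < sin (pi * y)" using that by (intro sin_gt_zero) auto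
    hence "ln (pi * y / sin (pi * y)) = ln (2 * pi) + ln y - ln (2 * sin (pi * y))"
      using that by (simp add: ln_div ln_mult)
    hence "y ^ (m - 1) * ln (pi * y / sin (pi * y))
        = y ^ (m - 1) * (ln (2 * pi) + ln y - ln (2 * sin (pi * y)))"
      by (rule arg_cong)
    thus ?thesis by (simp add: algebra_simps)
  qed
  thus ?thesis using integral by (rule has_integral_eq)
qed

lemma rzeta_even_weighted_sums:
  assumes "1 \<le> m"
  shows "(\<lambda>k. rzeta (2 * real (Suc k)) / (real (Suc k) * (2 * real (Suc k) + real m)))
           sums (ln (2 * pi) / real m - 1 / (real m)\<^sup>2 - ln_sin_moment m)"
proof (rule sums_of_has_integral_nonneg)
  define z where "z k = rzeta (2 * real (Suc k)) / real (Suc k)" for k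
  show "0 \<le> z k * y ^ (2 * Suc k + (m - 1))" if "y \<in> {0<..<1}" for k y
    using that rzeta_nonneg[of "2 * Suc k"] by (simp add: z_def)
  show "((\<lambda>y. z k * y ^ (2 * Suc k + (m - 1))) has_integral
      rzeta (2 * real (Suc k)) / (real (Suc k) * (2 * real (Suc k) + real m))) {0<..<1}" for k
  proof -
    have "((\<lambda>y. z k * y ^ (2 * Suc k + (m - 1))) has_integral
        z k * (1 / (real (2 * Suc k + (m - 1)) + 1))) {0..1}"
      by (intro has_integral_mult_right power_has_integral_01)
    moreover have "real (2 * Suc k + (m - 1)) + 1 = 2 * real (Suc k) + real m"
      using assms by simp
    ultimately show ?thesis by (simp add: z_def has_integral_Icc_iff_Ioo add.assoc)
  qed
  show "(\<lambda>k. z k * y ^ (2 * Suc k + (m - 1))) sums (y ^ (m - 1) * ln (pi * y / sin (pi * y)))"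
    if "y \<in> {0<..<1}" for y
  proof -
    have "(\<lambda>k. z k * y ^ (2 * Suc k) * y ^ (m - 1)) sums (ln (pi * y / sin (pi * y)) * y ^ (m - 1))"
      using that rzeta_even_ln_sin_sums[of y] by (intro sums_mult2) (simp add: z_def)
    thus ?thesis by (simp add: power_add mult_ac)
  qed
  show "((\<lambda>y. y ^ (m - 1) * ln (pi * y / sin (pi * y))) has_integral
      ln (2 * pi) / real m - 1 / (real m)\<^sup>2 - ln_sin_moment m) {0<..<1}"
    using assms by (rule ln_pi_div_sin_moment_has_integral)
qed

text \<open>The summand \<open>j = m/2\<close> of the odd-zeta sum in the theorem, which exists only for even \<open>m\<close>.\<close>

definition top_zeta_term :: "nat \<Rightarrow> real" where
  "top_zeta_term m = (if even m then (-1) ^ (m div 2) * fact (m - 1) * (rzeta (real m + 1) / (2 * pi) ^ m) else 0)"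

lemma odd_zeta_sum_eq:
  assumes "1 \<le> m"
  shows "fact (m - 1) *
           (\<Sum>j=1..m div 2. (-1) ^ j * rzeta (2 * real j + 1) / (fact (m - 2 * j) * (2 * pi) ^ (2 * j)))
         = ln_sin_moment m + top_zeta_term m"
proof (cases "even m")
  case True
  then obtain i where m: "m = 2 * Suc i"
    using assms by (metis evenE Suc_pred mult_0_right not_one_le_zero zero_less_iff_neq_zero)
  define f where "f j = (-1) ^ j * rzeta (2 * real j + 1) / (fact (m - 2 * j) * (2 * pi) ^ (2 * j))" for j
  have "(\<Sum>j=1..m div 2. f j) = (\<Sum>j=1..(m - 1) div 2. f j) + f (Suc i)"
    by (simp add: m)
  moreover have "fact (m - 1) * f (Suc i) = top_zeta_term m"
    by (simp add: f_def top_zeta_term_def m)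
  ultimately show ?thesis
    unfolding ln_sin_moment_def f_def[symmetric] by (simp add: distrib_left)
next
  case False
  hence "m div 2 = (m - 1) div 2" by (auto elim!: oddE)
  with False show ?thesis by (simp add: ln_sin_moment_def top_zeta_term_def)
qed

lemma top_zeta_term_diff:
  fixes m n :: nat
  assumes "m \<noteq> n" and "even m \<longleftrightarrow> even n"
  shows "(1 + (-1) ^ n) / (2 * of_int (int m - int n))
           * (\<i> ^ m * of_nat (fact (m - 1)) * complex_of_real (rzeta (real m + 1) / (2 * pi) ^ m)
              - \<i> ^ n * of_nat (fact (n - 1)) * complex_of_real (rzeta (real n + 1) / (2 * pi) ^ n))
         = complex_of_real ((top_zeta_term m - top_zeta_term n) / (real m - real n))"
  using assms by (cases "even n") (auto simp: top_zeta_term_def field_simps)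

lemma partial_fraction_diff:
  fixes a b c d z :: real
  assumes "a \<noteq> 0" "b + c \<noteq> 0" "b + d \<noteq> 0" "c \<noteq> d"
  shows "(z / (a * (b + d)) - z / (a * (b + c))) / (c - d) = z / (a * (b + c) * (b + d))"
proof -
  have "z / (a * (b + d)) - z / (a * (b + c)) = z * (c - d) / (a * (b + c) * (b + d))"
    using assms by (simp add: divide_simps) (simp add: algebra_simps)
  thus ?thesis using assms by simp
qed

lemma divided_difference_eq:
  fixes a b L Ma Mb :: real
  assumes "a \<noteq> 0" "b \<noteq> 0" "a \<noteq> b"
  shows "((L / b - 1 / b\<^sup>2 - Mb) - (L / a - 1 / a\<^sup>2 - Ma)) / (a - b)
           = - (a + b) / (a * b)\<^sup>2 + L / (a * b) + (Ma - Mb) / (a - b)"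
  using assms by (simp add: field_simps power2_eq_square)

theorem corollary21:
  fixes m n :: nat
  assumes "m > 0" and "n > 0" and "m \<noteq> n" and "even m \<longleftrightarrow> even n"
  shows "(\<lambda>k. complex_of_real (rzeta (2 * real (Suc k)) / (real (Suc k) * (2 * real (Suc k) + real m) * (2 * real (Suc k) + real n))))
           sums
         (complex_of_real (- (real m + real n) / (real m * real n)^2 + ln (2 * pi) / (real m * real n))
          - (1 + (-1)^n) / (2 * (of_int (int m - int n)))
            * (\<i>^m * of_nat (fact (m - 1)) * complex_of_real (rzeta (real m + 1) / (2 * pi)^m)
               - \<i>^n * of_nat (fact (n - 1)) * complex_of_real (rzeta (real n + 1) / (2 * pi)^n))
          + complex_of_real (1 / real_of_int (int m - int n)
            * (fact (m - 1) * (\<Sum>j=1..m div 2. (-1)^j * rzeta (2 * real j + 1) / (fact (m - 2 * j) * (2 * pi)^(2 * j)))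
               - fact (n - 1) * (\<Sum>j=1..n div 2. (-1)^j * rzeta (2 * real j + 1) / (fact (n - 2 * j) * (2 * pi)^(2 * j))))))"
proof -
  define F where "F q = fact (q - 1) *
    (\<Sum>j=1..q div 2. (-1)^j * rzeta (2 * real j + 1) / (fact (q - 2 * j) * (2 * pi)^(2 * j)))" for q :: nat
  define T where "T q = ln (2 * pi) / real q - 1 / (real q)\<^sup>2 - ln_sin_moment q" for q :: nat
  have F_eq: "F q = ln_sin_moment q + top_zeta_term q" if "0 < q" for q
    unfolding F_def using that by (intro odd_zeta_sum_eq) simp
  have "(\<lambda>k. (rzeta (2 * real (Suc k)) / (real (Suc k) * (2 * real (Suc k) + real n))
            - rzeta (2 * real (Suc k)) / (real (Suc k) * (2 * real (Suc k) + real m))) / (real m - real n))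
        sums ((T n - T m) / (real m - real n))"
    unfolding T_def using assms by (intro sums_divide sums_diff rzeta_even_weighted_sums) simp_all
  hence sums: "(\<lambda>k. rzeta (2 * real (Suc k))
          / (real (Suc k) * (2 * real (Suc k) + real m) * (2 * real (Suc k) + real n)))
        sums ((T n - T m) / (real m - real n))"
    using assms(3) by (simp add: partial_fraction_diff)
  have "(T n - T m) / (real m - real n) = - (real m + real n) / (real m * real n)\<^sup>2
      + ln (2 * pi) / (real m * real n) + (ln_sin_moment m - ln_sin_moment n) / (real m - real n)"
    unfolding T_def using assms by (intro divided_difference_eq) auto
  also have "\<dots> = - (real m + real n) / (real m * real n)\<^sup>2
      + ln (2 * pi) / (real m * real n) - (top_zeta_term m - top_zeta_term n) / (real m - real n)
      + 1 / (real m - real n) * (F m - F n)"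
    using assms by (simp add: F_eq diff_divide_distrib add_divide_distrib)
  finally have closed_form: "(T n - T m) / (real m - real n) = \<dots>" .
  show ?thesis
    using sums_of_real[OF sums] unfolding top_zeta_term_diff[OF assms(3,4)] F_def[symmetric] closed_form
    by (simp only: of_real_add[symmetric] of_real_diff[symmetric] of_int_diff of_int_of_nat_eq)
qed

end
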